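(* Let $d$ be an odd prime, with $\omega$, $D_{\mathbf p}$, $\Pi^j_k$ and $\Omega$ as in the context. If $|\phi\rangle\in\mathbb{C}^d$ is a fiducial vector, then $|\phi\rangle\langle\phi|\in\Omega$. That is, there exist real numbers $\alpha^j_r$ ($j=0,\dots,d$, $r=1,\dots,d-1$) with $\alpha^j_{d-r}=-\alpha^j_r$ such that $\langle\phi|\Pi^j_k|\phi\rangle=\frac1d+\frac{1}{d\sqrt{d+1}}\sum_{r=1}^{d-1}\omega^{\alpha^j_r+kr}$ for all $j,k$, and $|\phi\rangle\langle\phi|=\sum_{j=0}^{d}\sum_{k=0}^{d-1}\big(\langle\phi|\Pi^j_k|\phi\rangle-\tfrac{1}{d+1}\big)\Pi^j_k$.
   Context: Let $d$ be an odd prime and $\omega=e^{2\pi i/d}$; for real $x$, $\omega^{x}$ means $e^{2\pi i x/d}$. Let $\{|k\rangle\}_{k=0}^{d-1}$ be the computational basis of $\mathbb{C}^d$, with indices taken modulo $d$. Let $X|k\rangle=|k+1\rangle$ and $Z|k\rangle=\omega^k|k\rangle$, and $\tau=-e^{i\pi/d}$. For $\mathbf p=(p_1,p_2)\in\mathbb{Z}_d^2$ the displacement operator is $D_{\mathbf p}=\tau^{p_1p_2}X^{p_1}Z^{p_2}$. For $j\in\{0,\dots,d-1\}$ and $k\in\{0,\dots,d-1\}$, let $\Pi^j_k$ be the rank-one projector onto the eigenvector of $D_{(1,j)}$ with eigenvalue $\omega^k$ (each $D_{(1,j)}$ has nondegenerate spectrum $\{\omega^k\}$). Let $\Pi^d_k=|k\rangle\langle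 k|$, the eigenprojector of $Z$ with eigenvalue $\omega^k$. These $d+1$ bases are mutually unbiased. A unit vector $|\phi\rangle\in\mathbb{C}^d$ is called fiducial if $|\langle\phi|D_{\mathbf p}|\phi\rangle|^2=\frac{1}{d+1}$ for all $\mathbf p\in\mathbb{Z}_d^2\setminus\{(0,0)\}$; then $\{D_{\mathbf p}|\phi\rangle\}$ is a Weyl–Heisenberg covariant SIC-POVM. $\Omega$ denotes the set of all operators $\rho=\sum_{j=0}^{d}\sum_{k=0}^{d-1}\big(p^j_k-\tfrac{1}{d+1}\big)\Pi^j_k$ with $p^j_k=\frac1d+\frac{1}{d\sqrt{d+1}}\sum_{r=1}^{d-1}\omega^{\alpha^j_r+kr}$, where the $\alpha^j_r\in\mathbb{R}$ ($j=0,\dots,d$, $r=1,\dots,d-1$) satisfy $\alpha^j_{d-r}=-\alpha^j_r$. *)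

theory Defs
  imports Complex_Main "HOL-Computational_Algebra.Primes"
begin

text \<open>Conventions: vectors in C^d are functions nat => complex, only indices 0..d-1
  are meaningful; d x d matrices are functions nat => nat => complex, entries
  outside {0..<d} x {0..<d} are set to 0 by all constructions below.\<close>

type_synonym cvec = "nat \<Rightarrow> complex"
type_synonym cmat = "nat \<Rightarrow> nat \<Rightarrow> complex"

definition restr :: "nat \<Rightarrow> cmat \<Rightarrow> cmat" where
  "restr d A = (\<lambda>a b. if a < d \<and> b < d then A a b else 0)"

definition omega_pow :: "nat \<Rightarrow> real \<Rightarrow> complex" where
  "omega_pow d x = cis (2 * pi * x / real d)"

definition omega :: "nat \<Rightarrow> complex" where
  "omega d = omega_pow d 1"

definition tau :: "nat \<Rightarrow> complex" where
  "tau d = - cis (pi / real d)"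

definition mat_mult :: "nat \<Rightarrow> cmat \<Rightarrow> cmat \<Rightarrow> cmat" where
  "mat_mult d A B = restr d (\<lambda>a b. \<Sum>c<d. A a c * B c b)"

definition mat_id :: "nat \<Rightarrow> cmat" where
  "mat_id d = restr d (\<lambda>a b. if a = b then 1 else 0)"

fun mat_pow :: "nat \<Rightarrow> cmat \<Rightarrow> nat \<Rightarrow> cmat" where
  "mat_pow d A 0 = mat_id d"
| "mat_pow d A (Suc n) = mat_mult d A (mat_pow d A n)"

definition mat_scale :: "nat \<Rightarrow> complex \<Rightarrow> cmat \<Rightarrow> cmat" where
  "mat_scale d c A = restr d (\<lambda>a b. c * A a b)"

definition mat_vec :: "nat \<Rightarrow> cmat \<Rightarrow> cvec \<Rightarrow> cvec" where
  "mat_vec d A v = (\<lambda>a. \<Sum>b<d. A a b * v b)"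

definition shiftX :: "nat \<Rightarrow> cmat" where
  "shiftX d = restr d (\<lambda>a b. if a = (b + 1) mod d then 1 else 0)"

definition clockZ :: "nat \<Rightarrow> cmat" where
  "clockZ d = restr d (\<lambda>a b. if a = b then omega d ^ b else 0)"

definition displ :: "nat \<Rightarrow> nat \<Rightarrow> nat \<Rightarrow> cmat" where
  "displ d p1 p2 = mat_scale d (tau d ^ (p1 * p2))
      (mat_mult d (mat_pow d (shiftX d) p1) (mat_pow d (clockZ d) p2))"

definition inner :: "nat \<Rightarrow> cvec \<Rightarrow> cvec \<Rightarrow> complex" where
  "inner d u v = (\<Sum>a<d. cnj (u a) * v a)"

definition unit_vec :: "nat \<Rightarrow> cvec \<Rightarrow> bool" where
  "unit_vec d v \<longleftrightarrow> inner d v v = 1"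

definition outer :: "nat \<Rightarrow> cvec \<Rightarrow> cvec \<Rightarrow> cmat" where
  "outer d u v = restr d (\<lambda>a b. u a * cnj (v b))"

text \<open>The rank-one projector onto the (unique up to phase) eigenvector of A with eigenvalue lam\<close>
definition eigproj :: "nat \<Rightarrow> cmat \<Rightarrow> complex \<Rightarrow> cmat" where
  "eigproj d A lam = (THE P. \<exists>v. unit_vec d v \<and>
       (\<forall>a<d. mat_vec d A v a = lam * v a) \<and> P = outer d v v)"

definition Proj :: "nat \<Rightarrow> nat \<Rightarrow> nat \<Rightarrow> cmat" where
  "Proj d j k = (if j < d then eigproj d (displ d 1 j) (omega d ^ k)
                 else outer d (\<lambda>a. if a = k then 1 else 0) (\<lambda>a. if a = k then 1 else 0))"

definition fiducial :: "nat \<Rightarrow> cvec \<Rightarrow> bool" where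
  "fiducial d phi \<longleftrightarrow> unit_vec d phi \<and>
     (\<forall>p1<d. \<forall>p2<d. (p1, p2) \<noteq> (0, 0) \<longrightarrow>
        (cmod (inner d phi (mat_vec d (displ d p1 p2) phi)))\<^sup>2 = 1 / (real d + 1))"

end

theory Submission
  imports Defs "HOL-Library.Real_Mod"
begin

text \<open>
  Write \<open>\<zeta>(m) = \<omega>\<^sup>m\<close> and \<open>t = (d + 1)/2\<close>, the inverse of 2 modulo \<open>d\<close>. The eigenvectors of
  \<open>D(1,j)\<close> are the chirps \<open>\<zeta>(j t z\<^sup>2 - k z)/\<surd>d\<close>, so the discrete Fourier transform
  \<open>W\<^sub>j(r) = \<Sigma>\<^sub>k \<zeta>(k r) \<langle>\<phi>|\<Pi>\<^sup>j\<^sub>k|\<phi>\<rangle>\<close> of the \<open>j\<close>-th probability vector is, up to a phase,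
  \<open>\<langle>\<phi>|D(r, j r)|\<phi>\<rangle>\<close> (and \<open>\<langle>\<phi>|D(0, r)|\<phi>\<rangle>\<close> for \<open>j = d\<close>). For a fiducial vector these
  have modulus \<open>1/\<surd>(d + 1)\<close> when \<open>r \<noteq> 0\<close>, \<open>W\<^sub>j(0) = 1\<close>, and reality of the probabilities
  gives \<open>W\<^sub>j(d - r) = cnj (W\<^sub>j(r))\<close>. Fourier inversion then yields the phases \<open>\<alpha>\<close>.

  The reconstruction formula holds for every unit vector: summing \<open>\<langle>\<phi>|\<Pi>\<^sup>j\<^sub>k|\<phi>\<rangle> \<Pi>\<^sup>j\<^sub>k\<close> over
  all \<open>d + 1\<close> bases gives \<open>|\<phi>\<rangle>\<langle>\<phi>| + I\<close>, because for prime \<open>d\<close> the congruences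
  \<open>x - y \<equiv> b - a\<close> and \<open>x\<^sup>2 - y\<^sup>2 \<equiv> b\<^sup>2 - a\<^sup>2 (mod d)\<close> have only the obvious solutions,
  while each basis resolves the identity.
\<close>

definition zeta :: "nat \<Rightarrow> int \<Rightarrow> complex" where
  "zeta d m = cis (2 * pi * of_int m / real d)"

lemma zeta_add: "zeta d (a + b) = zeta d a * zeta d b"
  unfolding zeta_def by (simp add: cis_mult add_divide_distrib ring_distribs)

lemma zeta_0 [simp]: "zeta d 0 = 1"
  unfolding zeta_def by simp

lemma cnj_zeta: "cnj (zeta d a) = zeta d (- a)"
  unfolding zeta_def by (simp add: cis_cnj)

lemma norm_zeta [simp]: "norm (zeta d a) = 1"
  unfolding zeta_def by simp

lemma zeta_neq_0 [simp]: "zeta d a \<noteq> 0"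
  unfolding zeta_def by simp

lemma zeta_mult_self: "d > 0 \<Longrightarrow> zeta d (int d * q) = 1"
  unfolding zeta_def by (simp add: cis_eq_1_iff)

lemma zeta_eqI:
  assumes "d > 0" "a - b = int d * q"
  shows "zeta d a = zeta d b"
proof -
  have "a = b + int d * q" using assms(2) by simp
  then show ?thesis using zeta_mult_self[OF assms(1)] by (simp add: zeta_add)
qed

lemma zeta_eq_1_iff:
  assumes "d > 0"
  shows "zeta d m = 1 \<longleftrightarrow> int d dvd m"
proof
  assume "zeta d m = 1"
  then obtain n where "2 * pi * of_int m / real d = of_int n * (2 * pi)"
    unfolding zeta_def cis_eq_1_iff by blast
  then have "real_of_int m = of_int n * real d" using assms by (simp add: field_simps)
  then have "m = n * int d" by (metis of_int_eq_iff of_int_mult of_int_of_nat_eq)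
  then show "int d dvd m" by simp
next
  assume "int d dvd m"
  then show "zeta d m = 1" using zeta_mult_self[OF assms] by (auto elim!: dvdE)
qed

lemma zeta_power: "zeta d m ^ n = zeta d (int n * m)"
  by (induction n) (simp_all add: zeta_add distrib_right)

lemma sum_zeta_mult:
  assumes "d > 0"
  shows "(\<Sum>k<d. zeta d (int k * m)) = (if int d dvd m then of_nat d else 0)"
proof (cases "int d dvd m")
  case True
  then have "zeta d (int k * m) = 1" for k
    using assms by (simp add: zeta_eq_1_iff)
  then show ?thesis using True by simp
next
  case False
  then have ne: "zeta d m \<noteq> 1" using zeta_eq_1_iff[OF assms] by simp
  have "(\<Sum>k<d. zeta d (int k * m)) = (\<Sum>k<d. zeta d m ^ k)" by (simp add: zeta_power)
  also have "\<dots> = (zeta d m ^ d - 1) / (zeta d m - 1)" using ne by (rule geometric_sum)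
  also have "zeta d m ^ d = 1" using assms by (simp add: zeta_power zeta_mult_self)
  finally show ?thesis using False by simp
qed

lemma zeta_fourier_inversion:
  assumes "d > 0" "k < d"
  shows "p k = (\<Sum>r<d. zeta d (- (int k * int r)) * (\<Sum>k'<d. zeta d (int k' * int r) * p k')) / of_nat d"
proof -
  have "(\<Sum>r<d. zeta d (- (int k * int r)) * (\<Sum>k'<d. zeta d (int k' * int r) * p k')) =
      (\<Sum>k'<d. p k' * (\<Sum>r<d. zeta d (int r * (int k' - int k))))"
    unfolding sum_distrib_left
    by (subst sum.swap) (simp add: zeta_add[symmetric] algebra_simps)
  also have "\<dots> = (\<Sum>k'<d. if k' = k then p k' * of_nat d else 0)"
  proof (rule sum.cong)
    fix k' assume "k' \<in> {..<d}"
    then have "int d dvd (int k' - int k) \<longleftrightarrow> k' = k"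
      using assms by (auto simp: mod_eq_dvd_iff[symmetric])
    then show "p k' * (\<Sum>r<d. zeta d (int r * (int k' - int k))) =
        (if k' = k then p k' * of_nat d else 0)"
      by (simp add: sum_zeta_mult[OF assms(1)])
  qed simp
  also have "\<dots> = p k * of_nat d" using assms by simp
  finally show ?thesis using assms by simp
qed

lemma omega_power_eq_zeta: "omega d ^ n = zeta d (int n)"
  unfolding omega_def omega_pow_def zeta_def by (simp add: DeMoivre mult_ac)

definition inv_two :: "nat \<Rightarrow> int" where
  "inv_two d = (int d + 1) div 2"

lemma two_mult_inv_two: "odd d \<Longrightarrow> 2 * inv_two d = int d + 1"
  unfolding inv_two_def by (metis dvd_mult_div_cancel even_add even_of_nat odd_one of_nat_Suc
      odd_two_times_div_two_succ add.commute)

lemma tau_eq_zeta: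
  assumes "odd d"
  shows "tau d = zeta d (inv_two d)"
proof -
  obtain m where m: "d = 2 * m + 1" using assms oddE by blast
  have "real_of_int (inv_two d) = real m + 1" using m by (simp add: inv_two_def)
  then have "zeta d (inv_two d) = cis (2 * pi * (real m + 1) / real d)"
    unfolding zeta_def by simp
  also have "2 * pi * (real m + 1) / real d = pi + pi / real d"
    using m by (simp add: field_simps)
  finally show ?thesis unfolding tau_def by (simp add: cis_mult[symmetric])
qed

lemma int_mod_eq: "int (x mod d) = int x - int d * int (x div d)"
  by (simp add: of_nat_mod minus_div_mult_eq_mod[symmetric] algebra_simps)

lemma eq_if_dvd_diff:
  assumes "a < d" "b < d" "int d dvd (int a - int b)"
  shows "a = b"
proof -
  have "int a mod int d = int b mod int d" using assms(3) by (simp add: mod_eq_dvd_iff)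
  then show ?thesis using assms(1,2) by simp
qed

lemma dvd_iff_eq_add_mod:
  assumes "a < d" "b < d"
  shows "int d dvd (int r - int a + int b) \<longleftrightarrow> a = (b + r) mod d"
proof -
  have "int d dvd (int r - int a + int b) \<longleftrightarrow> (int b + int r) mod int d = int a mod int d"
    by (simp add: mod_eq_dvd_iff algebra_simps)
  also have "\<dots> \<longleftrightarrow> int ((b + r) mod d) = int a"
    using assms by (simp add: zmod_int)
  finally show ?thesis by auto
qed

lemma mod_Suc_eq_iff:
  fixes a b d :: nat
  assumes "a < d" "b < d"
  shows "a = (b + 1) mod d \<longleftrightarrow> b = (a + d - 1) mod d"
proof -
  have "a = (b + 1) mod d \<longleftrightarrow> int d dvd (1 - int a + int b)"
    using dvd_iff_eq_add_mod[OF assms, of 1] by simp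
  also have "\<dots> \<longleftrightarrow> int d dvd (int (d - 1) - int b + int a)"
  proof -
    have "int (d - 1) - int b + int a = int d - (1 - int a + int b)"
      using assms by (simp add: of_nat_diff)
    then show ?thesis by (metis dvd_refl dvd_diff_right_iff)
  qed
  also have "\<dots> \<longleftrightarrow> b = (a + d - 1) mod d"
    using dvd_iff_eq_add_mod[OF assms(2,1), of "d - 1"] assms by (simp add: add.commute)
  finally show ?thesis .
qed

lemma sum_rotate3:
  "(\<Sum>k\<in>K. \<Sum>a\<in>A. \<Sum>b\<in>B. f k a b) = (\<Sum>a\<in>A. \<Sum>b\<in>B. \<Sum>k\<in>K. f k a b)"
  by (subst sum.swap) (simp only: sum.swap[of _ B K])

lemma mat_pow_shiftX_entry:
  assumes "d > 0"
  shows "mat_pow d (shiftX d) n a b = (if a < d \<and> b < d \<and> a = (b + n) mod d then 1 else 0)"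
proof (induction n arbitrary: a b)
  case 0
  then show ?case by (simp add: mat_id_def restr_def)
next
  case (Suc n)
  have "(\<Sum>c<d. shiftX d a c * mat_pow d (shiftX d) n c b) = shiftX d a ((b + n) mod d)"
    if "b < d"
  proof -
    have "(\<Sum>c<d. shiftX d a c * mat_pow d (shiftX d) n c b) =
        (\<Sum>c<d. if c = (b + n) mod d then shiftX d a c else 0)"
      by (rule sum.cong) (auto simp: Suc that)
    then show ?thesis using assms by simp
  qed
  then have "mat_pow d (shiftX d) (Suc n) a b =
      (if a < d \<and> b < d then shiftX d a ((b + n) mod d) else 0)"
    by (simp add: mat_mult_def restr_def)
  then show ?case
    using assms by (auto simp: shiftX_def restr_def mod_Suc_eq)
qed

lemma mat_pow_clockZ_entry:
  assumes "d > 0"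
  shows "mat_pow d (clockZ d) n a b =
    (if a < d \<and> b < d \<and> a = b then zeta d (int n * int b) else 0)"
proof (induction n arbitrary: a b)
  case 0
  then show ?case by (simp add: mat_id_def restr_def)
next
  case (Suc n)
  have "(\<Sum>c<d. clockZ d a c * mat_pow d (clockZ d) n c b) =
      clockZ d a a * mat_pow d (clockZ d) n a b" if "a < d"
  proof -
    have "(\<Sum>c<d. clockZ d a c * mat_pow d (clockZ d) n c b) =
        (\<Sum>c<d. if c = a then clockZ d a c * mat_pow d (clockZ d) n c b else 0)"
      by (rule sum.cong) (auto simp: clockZ_def restr_def)
    then show ?thesis using that by simp
  qed
  then have "mat_pow d (clockZ d) (Suc n) a b =
      (if a < d \<and> b < d then clockZ d a a * mat_pow d (clockZ d) n a b else 0)"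
    by (simp add: mat_mult_def restr_def)
  also have "\<dots> = (if a < d \<and> b < d then
      clockZ d a a * (if a = b then zeta d (int n * int b) else 0) else 0)"
    by (simp add: Suc.IH)
  finally show ?case
    by (auto simp: clockZ_def restr_def omega_power_eq_zeta zeta_add[symmetric] distrib_right)
qed

text \<open>\<open>\<langle>\<phi>|X\<^bsup>p1\<^esup> Z\<^bsup>p2\<^esup>|\<phi>\<rangle>\<close>\<close>
definition shift_clock_mean :: "nat \<Rightarrow> cvec \<Rightarrow> nat \<Rightarrow> nat \<Rightarrow> complex" where
  "shift_clock_mean d phi p1 p2 =
     (\<Sum>b<d. cnj (phi ((b + p1) mod d)) * zeta d (int p2 * int b) * phi b)"

text \<open>The eigenvector of \<open>D(1,j)\<close> with eigenvalue \<open>\<omega>\<^sup>k\<close>.\<close>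
definition chirp :: "nat \<Rightarrow> nat \<Rightarrow> nat \<Rightarrow> cvec" where
  "chirp d j k z = zeta d (int j * inv_two d * int z ^ 2 - int k * int z) / sqrt (real d)"

definition prob :: "nat \<Rightarrow> cvec \<Rightarrow> nat \<Rightarrow> nat \<Rightarrow> complex" where
  "prob d phi j k = inner d phi (mat_vec d (Proj d j k) phi)"

definition prob_dft :: "nat \<Rightarrow> cvec \<Rightarrow> nat \<Rightarrow> nat \<Rightarrow> complex" where
  "prob_dft d phi j r = (\<Sum>k<d. zeta d (int k * int r) * prob d phi j k)"

lemma Proj_basis_entry: "Proj d d k a b = (if a = k \<and> b = k \<and> k < d then 1 else 0)"
  by (auto simp: Proj_def outer_def restr_def)

lemma prob_basis:
  assumes "k < d"
  shows "prob d phi d k = cnj (phi k) * phi k"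
proof -
  have "mat_vec d (Proj d d k) phi a = (\<Sum>b<d. if b = k then (if a = k then phi k else 0) else 0)"
    for a
    unfolding mat_vec_def Proj_basis_entry by (rule sum.cong) auto
  then have "mat_vec d (Proj d d k) phi a = (if a = k then phi k else 0)" for a
    using assms by simp
  then have "prob d phi d k = (\<Sum>a<d. if a = k then cnj (phi a) * phi k else 0)"
    unfolding prob_def inner_def by (intro sum.cong refl) simp
  then show ?thesis using assms by simp
qed

lemma prob_dft_basis: "prob_dft d phi d r = shift_clock_mean d phi 0 r"
  unfolding prob_dft_def shift_clock_mean_def
  by (intro sum.cong refl) (simp add: prob_basis mult_ac)

context
  fixes d :: nat
  assumes odd_d: "odd d"
begin

lemma d_pos [simp]: "d > 0"
  using odd_d by (rule odd_pos)

lemma d_neq_0 [simp]: "d \<noteq> 0"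
  using d_pos by simp

lemma displ_entry:
  "displ d p1 p2 a b = (if a < d \<and> b < d \<and> a = (b + p1) mod d
       then zeta d (inv_two d * int p1 * int p2 + int p2 * int b) else 0)"
proof -
  have XZ: "mat_mult d (mat_pow d (shiftX d) p1) (mat_pow d (clockZ d) p2) a b =
     (if a < d \<and> b < d \<and> a = (b + p1) mod d then zeta d (int p2 * int b) else 0)"
  proof (cases "a < d \<and> b < d")
    case True
    have "(\<Sum>c<d. mat_pow d (shiftX d) p1 a c * mat_pow d (clockZ d) p2 c b) =
       (\<Sum>c<d. if c = b then mat_pow d (shiftX d) p1 a c * mat_pow d (clockZ d) p2 c b else 0)"
      by (rule sum.cong) (auto simp: mat_pow_clockZ_entry)
    then show ?thesis
      using True by (simp add: mat_mult_def restr_def mat_pow_shiftX_entry mat_pow_clockZ_entry)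
  qed (auto simp: mat_mult_def restr_def)
  have "tau d ^ (p1 * p2) = zeta d (inv_two d * int p1 * int p2)"
    using odd_d by (simp add: tau_eq_zeta zeta_power mult_ac)
  with XZ show ?thesis
    by (auto simp: displ_def mat_scale_def restr_def zeta_add)
qed

lemma inner_displ_eq:
  "inner d phi (mat_vec d (displ d p1 p2) phi) =
    zeta d (inv_two d * int p1 * int p2) * shift_clock_mean d phi p1 p2"
proof -
  have "inner d phi (mat_vec d (displ d p1 p2) phi) =
     (\<Sum>b<d. \<Sum>a<d. cnj (phi a) * (displ d p1 p2 a b * phi b))"
    unfolding inner_def mat_vec_def sum_distrib_left by (rule sum.swap)
  also have "\<dots> = (\<Sum>b<d. \<Sum>a<d. if a = (b + p1) mod d then cnj (phi ((b + p1) mod d)) *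
      (zeta d (inv_two d * int p1 * int p2 + int p2 * int b) * phi b) else 0)"
    by (intro sum.cong refl) (auto simp: displ_entry)
  also have "\<dots> = zeta d (inv_two d * int p1 * int p2) * shift_clock_mean d phi p1 p2"
    unfolding shift_clock_mean_def
    by (simp add: sum_distrib_left zeta_add mult_ac)
  finally show ?thesis .
qed

lemma mat_vec_displ_1:
  assumes "a < d"
  shows "mat_vec d (displ d 1 j) u a =
     zeta d (inv_two d * int j + int j * int ((a + d - 1) mod d)) * u ((a + d - 1) mod d)"
proof -
  let ?b = "(a + d - 1) mod d"
  have "mat_vec d (displ d 1 j) u a =
      (\<Sum>b<d. if b = ?b then zeta d (inv_two d * int j + int j * int b) * u b else 0)"
    unfolding mat_vec_def
    by (rule sum.cong) (use assms mod_Suc_eq_iff[OF assms] in \<open>auto simp: displ_entry\<close>)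
  then show ?thesis using assms by simp
qed

lemma chirp_step:
  "zeta d (inv_two d * int j + int j * int b) * chirp d j k b =
    zeta d (int k) * chirp d j k ((b + 1) mod d)"
proof -
  define q where "q = int ((b + 1) div d)"
  have m: "int ((b + 1) mod d) = int b + 1 - int d * q"
    unfolding q_def by (simp add: int_mod_eq)
  have t: "2 * inv_two d = int d + 1" using two_mult_inv_two odd_d by simp
  have "zeta d (inv_two d * int j + int j * int b) *
      zeta d (int j * inv_two d * int b ^ 2 - int k * int b) =
    zeta d (int k) * zeta d (int j * inv_two d * int ((b + 1) mod d) ^ 2 - int k * int ((b + 1) mod d))"
    unfolding zeta_add[symmetric]
    by (rule zeta_eqI[OF d_pos, where q = "- int j * int b + 2 * int j * inv_two d * (int b + 1) * q
           - int j * inv_two d * int d * q ^ 2 - int k * q"])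
       (use m t in algebra)
  then show ?thesis unfolding chirp_def by (simp add: mult_ac)
qed

lemma chirp_eigenvector:
  assumes "a < d"
  shows "mat_vec d (displ d 1 j) (chirp d j k) a = omega d ^ k * chirp d j k a"
proof -
  let ?b = "(a + d - 1) mod d"
  have "?b < d" using assms by simp
  moreover have "a = (?b + 1) mod d" using mod_Suc_eq_iff[OF assms] assms by simp
  ultimately show ?thesis using mat_vec_displ_1[OF assms] chirp_step
    by (simp add: omega_power_eq_zeta)
qed

lemma norm_chirp_squared: "norm (chirp d j k z) ^ 2 = 1 / real d"
  unfolding chirp_def by (simp add: norm_divide power_divide)

lemma unit_vec_chirp: "unit_vec d (chirp d j k)"
  unfolding unit_vec_def inner_def
  by (simp add: complex_norm_square[symmetric] mult.commute norm_chirp_squared)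

text \<open>The eigenvalue equation is a first-order recurrence in the coordinate, so an
  eigenvector is a multiple of the chirp, and normalisation fixes the multiple up to a phase.\<close>
lemma outer_eigenvector_displ_1:
  assumes "unit_vec d w"
    and eig: "\<forall>a<d. mat_vec d (displ d 1 j) w a = omega d ^ k * w a"
  shows "outer d w w = outer d (chirp d j k) (chirp d j k)"
proof -
  let ?v = "chirp d j k"
  have step_w: "w (b + 1) = zeta d (inv_two d * int j + int j * int b) / zeta d (int k) * w b"
    if "b + 1 < d" for b
  proof -
    have "(b + 1 + d - 1) mod d = b" using that by simp
    then show ?thesis
      using mat_vec_displ_1[OF that, of j w] eig that
      by (simp add: omega_power_eq_zeta field_simps)
  qed
  have step_v: "?v (b + 1) = zeta d (inv_two d * int j + int j * int b) / zeta d (int k) * ?v b"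
    if "b + 1 < d" for b
    using chirp_step[of j b k] that by (simp add: field_simps)
  have proportional: "w b * ?v 0 = w 0 * ?v b" if "b < d" for b
    using that
  proof (induction b)
    case (Suc b)
    then show ?case using step_w[of b] step_v[of b] by simp
  qed simp
  define c where "c = w 0 / ?v 0"
  have w: "w a = c * ?v a" if "a < d" for a
    using proportional[OF that] unfolding c_def chirp_def by (simp add: field_simps)
  have "1 = inner d w w" using assms(1) unfolding unit_vec_def by simp
  also have "\<dots> = cnj c * c * inner d ?v ?v"
    unfolding inner_def sum_distrib_left by (rule sum.cong) (simp_all add: w mult_ac)
  also have "\<dots> = cnj c * c" using unit_vec_chirp unfolding unit_vec_def by simp
  finally have c: "cnj c * c = 1" by simp
  have "w a * cnj (w b) = ?v a * cnj (?v b)" if "a < d" "b < d" for a b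
    using c that by (simp add: w mult_ac)
  then show ?thesis unfolding outer_def restr_def by (intro ext) auto
qed

lemma Proj_eq_outer_chirp:
  assumes "j < d"
  shows "Proj d j k = outer d (chirp d j k) (chirp d j k)"
proof -
  have "eigproj d (displ d 1 j) (omega d ^ k) = outer d (chirp d j k) (chirp d j k)"
    unfolding eigproj_def
    using unit_vec_chirp chirp_eigenvector outer_eigenvector_displ_1
    by (intro the_equality) blast+
  then show ?thesis using assms unfolding Proj_def by simp
qed

lemma Proj_entry:
  assumes "j < d"
  shows "Proj d j k a b = (if a < d \<and> b < d then
     zeta d (int j * inv_two d * (int a ^ 2 - int b ^ 2) - int k * (int a - int b)) / of_nat d
     else 0)"
proof -
  have s: "complex_of_real (sqrt (real d)) * complex_of_real (sqrt (real d)) = of_nat d"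
    by (simp flip: of_real_mult)
  have "chirp d j k a * cnj (chirp d j k b) =
     zeta d (int j * inv_two d * (int a ^ 2 - int b ^ 2) - int k * (int a - int b)) / of_nat d"
    unfolding chirp_def by (simp add: cnj_zeta s zeta_add[symmetric] algebra_simps)
  then show ?thesis using Proj_eq_outer_chirp[OF assms] by (simp add: outer_def restr_def)
qed

lemma Proj_outside:
  assumes "j \<le> d" "\<not> (a < d \<and> b < d)"
  shows "Proj d j k a b = 0"
  using assms by (cases "j = d") (auto simp: Proj_basis_entry Proj_entry)

lemma prob_eq:
  assumes "j < d"
  shows "prob d phi j k = (\<Sum>a<d. \<Sum>b<d. cnj (phi a) * phi b *
      zeta d (int j * inv_two d * (int a ^ 2 - int b ^ 2) - int k * (int a - int b))) / of_nat d"
  unfolding prob_def inner_def mat_vec_def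
  by (simp add: Proj_entry[OF assms] sum_distrib_left sum_divide_distrib mult_ac)

lemma cnj_prob:
  assumes "j \<le> d" "k < d"
  shows "cnj (prob d phi j k) = prob d phi j k"
proof (cases "j = d")
  case True
  then show ?thesis using assms by (simp add: prob_basis mult.commute)
next
  case False
  then have j: "j < d" using assms by simp
  define G where "G a b = cnj (phi a) * phi b *
      zeta d (int j * inv_two d * (int a ^ 2 - int b ^ 2) - int k * (int a - int b))" for a b
  have "cnj (G a b) = G b a" for a b
    unfolding G_def by (simp add: cnj_zeta algebra_simps)
  then have "cnj (\<Sum>a<d. \<Sum>b<d. G a b) = (\<Sum>a<d. \<Sum>b<d. G b a)"
    by simp
  also have "\<dots> = (\<Sum>a<d. \<Sum>b<d. G a b)" by (rule sum.swap)
  finally show ?thesis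
    unfolding prob_eq[OF j] G_def[symmetric] by simp
qed

text \<open>Completing the square, using \<open>2 t \<equiv> 1 (mod d)\<close> for \<open>t = inv_two d\<close>.\<close>
lemma zeta_chirp_shift:
  "zeta d (int j * inv_two d * (int ((b + r) mod d) ^ 2 - int b ^ 2)) =
     zeta d (int j * inv_two d * int r ^ 2) * zeta d (int ((j * r) mod d) * int b)"
proof -
  define q1 where "q1 = int ((b + r) div d)"
  define q2 where "q2 = int ((j * r) div d)"
  have m: "int ((b + r) mod d) = int b + int r - int d * q1"
    unfolding q1_def by (simp add: int_mod_eq)
  have s: "int ((j * r) mod d) = int j * int r - int d * q2"
    unfolding q2_def by (simp add: int_mod_eq)
  have t: "2 * inv_two d = int d + 1" using two_mult_inv_two odd_d by simp
  show ?thesis unfolding zeta_add[symmetric]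
    by (rule zeta_eqI[OF d_pos, where q = "int j * int r * int b
           - 2 * int j * inv_two d * (int b + int r) * q1 + int j * inv_two d * int d * q1 ^ 2
           + q2 * int b"])
       (use m s t in algebra)
qed

lemma prob_dft_eq:
  assumes "j < d" "r < d"
  shows "prob_dft d phi j r =
    zeta d (int j * inv_two d * int r ^ 2) * shift_clock_mean d phi r ((j * r) mod d)"
proof -
  define F where
    "F a b = cnj (phi a) * phi b * zeta d (int j * inv_two d * (int a ^ 2 - int b ^ 2))" for a b
  have "prob_dft d phi j r =
     (\<Sum>k<d. \<Sum>a<d. \<Sum>b<d. F a b * zeta d (int k * (int r - int a + int b))) / of_nat d"
    unfolding prob_dft_def prob_eq[OF assms(1)] F_def
    by (simp add: sum_distrib_left sum_divide_distrib zeta_add[symmetric] algebra_simps)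
  also have "\<dots> = (\<Sum>a<d. \<Sum>b<d. F a b * (\<Sum>k<d. zeta d (int k * (int r - int a + int b)))) /
      of_nat d"
    by (subst sum_rotate3) (simp add: sum_distrib_left)
  also have "\<dots> = (\<Sum>a<d. \<Sum>b<d. if a = (b + r) mod d then F a b else 0)"
  proof -
    have "F a b * (\<Sum>k<d. zeta d (int k * (int r - int a + int b))) / of_nat d =
        (if a = (b + r) mod d then F a b else 0)" if "a < d" "b < d" for a b
      using assms that by (simp add: sum_zeta_mult dvd_iff_eq_add_mod)
    then show ?thesis by (simp add: sum_divide_distrib)
  qed
  also have "\<dots> = (\<Sum>b<d. F ((b + r) mod d) b)"
    using assms by (subst sum.swap) simp
  also have "\<dots> = zeta d (int j * inv_two d * int r ^ 2) * shift_clock_mean d phi r ((j * r) mod d)"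
    unfolding shift_clock_mean_def F_def zeta_chirp_shift
    by (simp add: sum_distrib_left mult_ac)
  finally show ?thesis .
qed

lemma prob_dft_0:
  assumes "j \<le> d" "unit_vec d phi"
  shows "prob_dft d phi j 0 = 1"
proof -
  have "shift_clock_mean d phi 0 0 = 1"
    using assms(2) unfolding unit_vec_def inner_def shift_clock_mean_def by simp
  then show ?thesis
    using assms by (cases "j = d") (simp_all add: prob_dft_basis prob_dft_eq)
qed

lemma cnj_prob_dft:
  assumes "j \<le> d" "r \<le> d"
  shows "cnj (prob_dft d phi j r) = prob_dft d phi j (d - r)"
  unfolding prob_dft_def
proof (simp, intro sum.cong refl)
  fix k assume "k \<in> {..<d}"
  moreover have "zeta d (- (int k * int r)) = zeta d (int k * int (d - r))"
    by (rule zeta_eqI[OF d_pos, where q = "- int k"])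
       (use assms in \<open>simp add: of_nat_diff algebra_simps\<close>)
  ultimately show "cnj (zeta d (int k * int r)) * cnj (prob d phi j k) =
      zeta d (int k * int (d - r)) * prob d phi j k"
    using cnj_prob[OF assms(1)] by (simp add: cnj_zeta)
qed

lemma norm_prob_dft_squared:
  assumes "j \<le> d" "fiducial d phi" "0 < r" "r < d"
  shows "(cmod (prob_dft d phi j r))\<^sup>2 = 1 / (real d + 1)"
proof -
  have mean: "(cmod (shift_clock_mean d phi p1 p2))\<^sup>2 = 1 / (real d + 1)"
    if "p1 < d" "p2 < d" "(p1, p2) \<noteq> (0, 0)" for p1 p2
  proof -
    have "(cmod (inner d phi (mat_vec d (displ d p1 p2) phi)))\<^sup>2 = 1 / (real d + 1)"
      using assms(2) that unfolding fiducial_def by blast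
    then show ?thesis by (simp add: inner_displ_eq norm_mult)
  qed
  show ?thesis
  proof (cases "j = d")
    case True
    then show ?thesis using assms mean[of 0 r] by (simp add: prob_dft_basis)
  next
    case False
    then show ?thesis using assms mean[of r "(j * r) mod d"] by (simp add: prob_dft_eq norm_mult)
  qed
qed

text \<open>For odd \<open>d\<close> the indices \<open>r\<close> and \<open>d - r\<close> never coincide, so the phases can be chosen
  freely for \<open>2 r < d\<close> and are then forced on the other half.\<close>
lemma antisymmetric_phases_exist:
  fixes u :: "nat \<Rightarrow> complex"
  assumes norm_u: "\<And>r. r \<in> {1..d-1} \<Longrightarrow> cmod (u r) = 1"
    and u_cnj: "\<And>r. r \<in> {1..d-1} \<Longrightarrow> u (d - r) = cnj (u r)"
  shows "\<exists>\<alpha> :: nat \<Rightarrow> real. (\<forall>r\<in>{1..d-1}. \<alpha> (d - r) = - \<alpha> r) \<and>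
    (\<forall>r\<in>{1..d-1}. cis (2 * pi * \<alpha> r / real d) = u r)"
proof -
  have cis_Arg_u: "cis (Arg (u r)) = u r" if "r \<in> {1..d-1}" for r
    using norm_u[OF that] cis_Arg[of "u r"] by (cases "u r = 0") (auto simp: sgn_div_norm)
  define \<alpha> where "\<alpha> r = (if 2 * r < d then real d * Arg (u r) / (2 * pi)
      else - (real d * Arg (u (d - r)) / (2 * pi)))" for r
  have "\<alpha> (d - r) = - \<alpha> r" if "r \<in> {1..d-1}" for r
  proof -
    have "2 * r \<noteq> d" using odd_d by auto
    then show ?thesis using that unfolding \<alpha>_def by auto
  qed
  moreover have "cis (2 * pi * \<alpha> r / real d) = u r" if r: "r \<in> {1..d-1}" for r
  proof (cases "2 * r < d")
    case True
    then show ?thesis using cis_Arg_u[OF r] d_pos unfolding \<alpha>_def by simp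
  next
    case False
    have "d - r \<in> {1..d-1}" using r by auto
    then have "cis (2 * pi * \<alpha> r / real d) = cnj (u (d - r))"
      using False d_pos cis_Arg_u[of "d - r"] unfolding \<alpha>_def by (simp add: cis_cnj[symmetric])
    also have "\<dots> = u r" using u_cnj[OF r] by simp
    finally show ?thesis .
  qed
  ultimately show ?thesis by blast
qed

lemma dft_phase_representation:
  fixes p :: "nat \<Rightarrow> complex"
  defines "W \<equiv> \<lambda>r. \<Sum>k<d. zeta d (int k * int r) * p k"
  assumes W_0: "W 0 = 1"
    and norm_W: "\<And>r. 0 < r \<Longrightarrow> r < d \<Longrightarrow> (cmod (W r))\<^sup>2 = 1 / (real d + 1)"
    and cnj_W: "\<And>r. r \<le> d \<Longrightarrow> cnj (W r) = W (d - r)"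
  shows "\<exists>\<alpha> :: nat \<Rightarrow> real. (\<forall>r\<in>{1..d-1}. \<alpha> (d - r) = - \<alpha> r) \<and>
     (\<forall>k<d. p k = 1 / real d + 1 / (real d * sqrt (real d + 1)) *
           (\<Sum>r=1..d-1. omega_pow d (\<alpha> r + real k * real r)))"
proof -
  define s where "s = sqrt (real d + 1)"
  have "s > 0" unfolding s_def by simp
  define u where "u r = W (d - r) * complex_of_real s" for r
  have "cmod (u r) = 1" if "r \<in> {1..d-1}" for r
  proof -
    have "(cmod (W (d - r)))\<^sup>2 = 1 / (real d + 1)" using that by (intro norm_W) auto
    then have "cmod (W (d - r)) = 1 / s" unfolding s_def
      by (metis norm_ge_zero real_sqrt_divide real_sqrt_one real_sqrt_unique)
    then show ?thesis unfolding u_def using \<open>s > 0\<close> by (simp add: norm_mult)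
  qed
  moreover have "u (d - r) = cnj (u r)" if "r \<in> {1..d-1}" for r
    unfolding u_def using that cnj_W[of "d - r"] by auto
  ultimately obtain \<alpha> :: "nat \<Rightarrow> real" where
    antisym: "\<forall>r\<in>{1..d-1}. \<alpha> (d - r) = - \<alpha> r" and
    cis_\<alpha>: "\<forall>r\<in>{1..d-1}. cis (2 * pi * \<alpha> r / real d) = u r"
    using antisymmetric_phases_exist by blast
  have "p k = 1 / real d + 1 / (real d * sqrt (real d + 1)) *
           (\<Sum>r=1..d-1. omega_pow d (\<alpha> r + real k * real r))" if k: "k < d" for k
  proof -
    have "p k = (\<Sum>r<d. zeta d (- (int k * int r)) * W r) / of_nat d"
      unfolding W_def by (rule zeta_fourier_inversion[OF d_pos k])
    also have "{..<d} = insert 0 {1..d-1}" using d_pos by auto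
    also have "(\<Sum>r\<in>insert 0 {1..d-1}. zeta d (- (int k * int r)) * W r) =
        1 + (\<Sum>r=1..d-1. zeta d (- (int k * int r)) * W r)"
      by (subst sum.insert) (auto simp: W_0)
    also have "(\<Sum>r=1..d-1. zeta d (- (int k * int r)) * W r) =
        (\<Sum>r=1..d-1. zeta d (- (int k * int (d - r))) * W (d - r))"
      by (subst sum.atLeastAtMost_rev) (intro sum.cong refl, use d_pos in auto)
    also have "\<dots> = (\<Sum>r=1..d-1. omega_pow d (\<alpha> r + real k * real r)) / complex_of_real s"
      unfolding sum_divide_distrib
    proof (intro sum.cong refl)
      fix r assume r: "r \<in> {1..d-1}"
      have "int (d - r) = int d - int r" using r by auto
      then have "zeta d (- (int k * int (d - r))) = zeta d (int k * int r)"
        by (intro zeta_eqI[OF d_pos, where q = "- int k"]) (simp add: algebra_simps)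
      moreover have "omega_pow d (\<alpha> r + real k * real r) =
          cis (2 * pi * \<alpha> r / real d) * zeta d (int k * int r)"
        unfolding omega_pow_def zeta_def by (simp add: cis_mult add_divide_distrib ring_distribs)
      ultimately show "zeta d (- (int k * int (d - r))) * W (d - r) =
          omega_pow d (\<alpha> r + real k * real r) / complex_of_real s"
        using cis_\<alpha> r \<open>s > 0\<close> unfolding u_def by simp
    qed
    finally show ?thesis using d_pos unfolding s_def by (simp add: field_simps)
  qed
  with antisym show ?thesis by blast
qed

lemma prob_phase_representation:
  assumes "j \<le> d" "fiducial d phi"
  shows "\<exists>\<alpha> :: nat \<Rightarrow> real. (\<forall>r\<in>{1..d-1}. \<alpha> (d - r) = - \<alpha> r) \<and>
     (\<forall>k<d. prob d phi j k = 1 / real d + 1 / (real d * sqrt (real d + 1)) *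
           (\<Sum>r=1..d-1. omega_pow d (\<alpha> r + real k * real r)))"
proof (rule dft_phase_representation[of "prob d phi j", folded prob_dft_def])
  show "prob_dft d phi j 0 = 1"
    using assms fiducial_def prob_dft_0 by blast
  show "(cmod (prob_dft d phi j r))\<^sup>2 = 1 / (real d + 1)" if "0 < r" "r < d" for r
    using norm_prob_dft_squared[OF assms that] .
  show "cnj (prob_dft d phi j r) = prob_dft d phi j (d - r)" if "r \<le> d" for r
    using cnj_prob_dft[OF assms(1) that] .
qed

lemma sum_Proj_eq_id:
  assumes "j \<le> d" "a < d" "b < d"
  shows "(\<Sum>k<d. Proj d j k a b) = (if a = b then 1 else 0)"
proof (cases "j = d")
  case True
  have "(\<Sum>k<d. Proj d j k a b) = (\<Sum>k<d. if k = a then (if b = a then 1 else 0) else 0)"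
    using True by (intro sum.cong refl) (auto simp: Proj_basis_entry)
  then show ?thesis using assms by simp
next
  case False
  then have j: "j < d" using assms by simp
  have "(\<Sum>k<d. Proj d j k a b) = zeta d (int j * inv_two d * (int a ^ 2 - int b ^ 2)) *
      (\<Sum>k<d. zeta d (int k * (int b - int a))) / of_nat d"
    using assms unfolding Proj_entry[OF j] sum_divide_distrib sum_distrib_left
    by (intro sum.cong refl) (simp add: zeta_add[symmetric] algebra_simps)
  also have "\<dots> = (if a = b then 1 else 0)"
    using eq_if_dvd_diff[of b d a] assms d_pos by (auto simp: sum_zeta_mult)
  finally show ?thesis .
qed

lemma sum_prob_Proj_chirp:
  assumes "j < d" "a < d" "b < d"
  shows "(\<Sum>k<d. prob d phi j k * Proj d j k a b) =
     (\<Sum>x<d. \<Sum>y<d. if int d dvd (int x - int y + int a - int b) then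
        cnj (phi x) * phi y *
          zeta d (int j * (inv_two d * (int x ^ 2 - int y ^ 2 + int a ^ 2 - int b ^ 2)))
      else 0) / of_nat d"
proof -
  define c where "c x y = cnj (phi x) * phi y *
      zeta d (int j * (inv_two d * (int x ^ 2 - int y ^ 2 + int a ^ 2 - int b ^ 2)))" for x y
  have summand: "prob d phi j k * Proj d j k a b =
    (\<Sum>x<d. \<Sum>y<d. c x y * zeta d (int k * - (int x - int y + int a - int b))) / (of_nat d)\<^sup>2"
    for k
  proof -
    have "prob d phi j k * Proj d j k a b = (\<Sum>x<d. \<Sum>y<d. cnj (phi x) * phi y *
        zeta d (int j * inv_two d * (int x ^ 2 - int y ^ 2) - int k * (int x - int y)) *
        zeta d (int j * inv_two d * (int a ^ 2 - int b ^ 2) - int k * (int a - int b))) /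
      (of_nat d)\<^sup>2"
      unfolding prob_eq[OF assms(1)] Proj_entry[OF assms(1)]
      using assms by (simp add: sum_distrib_right sum_divide_distrib power2_eq_square)
    then show ?thesis
      unfolding c_def mult.assoc zeta_add[symmetric] by (simp add: algebra_simps)
  qed
  have "(\<Sum>k<d. prob d phi j k * Proj d j k a b) =
      (\<Sum>k<d. \<Sum>x<d. \<Sum>y<d. c x y * zeta d (int k * - (int x - int y + int a - int b))) /
        (of_nat d)\<^sup>2"
    by (simp only: summand sum_divide_distrib)
  also have "\<dots> =
      (\<Sum>x<d. \<Sum>y<d. c x y * (\<Sum>k<d. zeta d (int k * - (int x - int y + int a - int b)))) /
        (of_nat d)\<^sup>2"
    by (subst sum_rotate3) (simp only: sum_distrib_left)
  also have "\<dots> = (\<Sum>x<d. \<Sum>y<d. if int d dvd (int x - int y + int a - int b) then c x y else 0) /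
      of_nat d"
  proof -
    have "c x y * (\<Sum>k<d. zeta d (int k * - (int x - int y + int a - int b))) / (of_nat d)\<^sup>2 =
        (if int d dvd (int x - int y + int a - int b) then c x y else 0) / of_nat d" for x y
      using assms d_pos dvd_minus_iff[of "int d" "int x - int y + int a - int b"]
      by (simp add: sum_zeta_mult power2_eq_square)
    then show ?thesis by (simp add: sum_divide_distrib)
  qed
  finally show ?thesis unfolding c_def .
qed

end

text \<open>Eliminating \<open>y\<close> leaves \<open>(a - b)(b - x) \<equiv> 0 (mod d)\<close>; this is where primality of \<open>d\<close>
  is used.\<close>
lemma congruence_pair_iff:
  assumes "prime d" "odd d" "a < d" "b < d" "x < d" "y < d"
  shows "(int d dvd (int x - int y + int a - int b) \<and>
          int d dvd (inv_two d * (int x ^ 2 - int y ^ 2 + int a ^ 2 - int b ^ 2)))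
     \<longleftrightarrow> ((x = b \<and> y = a) \<or> (a = b \<and> x = y))"
proof
  assume h: "int d dvd (int x - int y + int a - int b) \<and>
          int d dvd (inv_two d * (int x ^ 2 - int y ^ 2 + int a ^ 2 - int b ^ 2))"
  obtain q where q: "int x - int y + int a - int b = int d * q" using h by (auto elim: dvdE)
  obtain q' where q': "inv_two d * (int x ^ 2 - int y ^ 2 + int a ^ 2 - int b ^ 2) = int d * q'"
    using h by (auto elim: dvdE)
  have t: "2 * inv_two d = int d + 1" using two_mult_inv_two assms by simp
  have y: "int y = int x + int a - int b - int d * q" using q by simp
  have "(int a - int b) * (int b - int x) =
     int d * (q' - (int a - int b) * (int b - int x)
        - inv_two d * (2 * (int x + int a - int b) * q - int d * q ^ 2))"
    using y q' t by algebra
  then have "int d dvd (int a - int b) * (int b - int x)" by (rule dvdI)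
  moreover have "prime (int d)" using assms by simp
  ultimately have "int d dvd (int a - int b) \<or> int d dvd (int b - int x)"
    using prime_dvd_mult_iff by blast
  then show "(x = b \<and> y = a) \<or> (a = b \<and> x = y)"
  proof
    assume "int d dvd (int a - int b)"
    then have "a = b" using eq_if_dvd_diff assms by blast
    moreover from this have "int d dvd (int x - int y)" using h by simp
    then have "x = y" using eq_if_dvd_diff assms by blast
    ultimately show ?thesis by simp
  next
    assume "int d dvd (int b - int x)"
    then have "x = b" using eq_if_dvd_diff assms by blast
    moreover from this have "int d dvd (int a - int y)" using h by simp
    then have "a = y" using eq_if_dvd_diff assms by blast
    ultimately show ?thesis by simp
  qed
qed auto

lemma sum_prob_Proj_chirps:
  assumes "prime d" "odd d" "a < d" "b < d"
  shows "(\<Sum>j<d. \<Sum>k<d. prob d phi j k * Proj d j k a b) =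
    (if a = b then inner d phi phi else phi a * cnj (phi b))"
proof -
  have "d > 0" using assms(1) prime_gt_0_nat by blast
  define D where "D x y \<longleftrightarrow> int d dvd (int x - int y + int a - int b)" for x y
  define Q where "Q x y = inv_two d * (int x ^ 2 - int y ^ 2 + int a ^ 2 - int b ^ 2)" for x y
  define c where "c x y = cnj (phi x) * phi y" for x y
  have "(\<Sum>j<d. \<Sum>k<d. prob d phi j k * Proj d j k a b) =
      (\<Sum>j<d. \<Sum>x<d. \<Sum>y<d. if D x y then c x y * zeta d (int j * Q x y) else 0) / of_nat d"
    unfolding D_def Q_def c_def using assms
    by (simp add: sum_prob_Proj_chirp sum_divide_distrib)
  also have "\<dots> = (\<Sum>x<d. \<Sum>y<d. \<Sum>j<d. if D x y then c x y * zeta d (int j * Q x y) else 0) /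
      of_nat d"
    by (subst sum_rotate3) (rule refl)
  also have "\<dots> = (\<Sum>x<d. \<Sum>y<d. if (x = b \<and> y = a) \<or> (a = b \<and> x = y) then c x y else 0)"
  proof -
    have "(\<Sum>j<d. if D x y then c x y * zeta d (int j * Q x y) else 0) / of_nat d =
        (if (x = b \<and> y = a) \<or> (a = b \<and> x = y) then c x y else 0)" if "x < d" "y < d" for x y
    proof -
      have "(\<Sum>j<d. if D x y then c x y * zeta d (int j * Q x y) else 0) =
          (if D x y \<and> int d dvd Q x y then c x y * of_nat d else 0)"
        using \<open>d > 0\<close> by (cases "D x y") (simp_all add: sum_distrib_left[symmetric] sum_zeta_mult)
      then show ?thesis
        using congruence_pair_iff[OF assms that] \<open>d > 0\<close> unfolding D_def Q_def by simp
    qed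
    then show ?thesis by (simp add: sum_divide_distrib)
  qed
  also have "\<dots> = (if a = b then inner d phi phi else phi a * cnj (phi b))"
  proof (cases "a = b")
    case True
    then have "(\<Sum>x<d. \<Sum>y<d. if (x = b \<and> y = a) \<or> (a = b \<and> x = y) then c x y else 0) =
        (\<Sum>x<d. \<Sum>y<d. if y = x then c x y else 0)"
      by (intro sum.cong refl) auto
    then show ?thesis using True unfolding inner_def c_def by simp
  next
    case False
    then have "(\<Sum>x<d. \<Sum>y<d. if (x = b \<and> y = a) \<or> (a = b \<and> x = y) then c x y else 0) =
        (\<Sum>x<d. if x = b then (\<Sum>y<d. if y = a then c x y else 0) else 0)"
      by (intro sum.cong refl) auto
    then show ?thesis using False assms unfolding c_def by (simp add: mult.commute)
  qed
  finally show ?thesis .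
qed

text \<open>The quantum 2-design property of a complete set of mutually unbiased bases.\<close>
lemma sum_prob_Proj:
  assumes "prime d" "odd d" "a < d" "b < d"
  shows "(\<Sum>j\<le>d. \<Sum>k<d. prob d phi j k * Proj d j k a b) =
    phi a * cnj (phi b) + (if a = b then inner d phi phi else 0)"
proof -
  have "(\<Sum>k<d. prob d phi d k * Proj d d k a b) =
      (\<Sum>k<d. if k = a then (if b = a then cnj (phi a) * phi a else 0) else 0)"
    by (intro sum.cong refl) (auto simp: prob_basis Proj_basis_entry)
  then have "(\<Sum>k<d. prob d phi d k * Proj d d k a b) =
      (if a = b then phi a * cnj (phi b) else 0)"
    using assms by (auto simp: mult.commute)
  then show ?thesis
    using sum_prob_Proj_chirps[OF assms, of phi] by (simp add: lessThan_Suc_atMost[symmetric])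
qed

lemma outer_eq_sum_prob_Proj:
  assumes "prime d" "odd d" "unit_vec d phi"
  shows "outer d phi phi =
    (\<lambda>a b. \<Sum>j\<le>d. \<Sum>k<d. (prob d phi j k - 1 / (real d + 1)) * Proj d j k a b)"
proof (intro ext)
  fix a b
  show "outer d phi phi a b =
    (\<Sum>j\<le>d. \<Sum>k<d. (prob d phi j k - 1 / (real d + 1)) * Proj d j k a b)"
  proof (cases "a < d \<and> b < d")
    case False
    then show ?thesis
      using Proj_outside[OF assms(2)] by (auto simp: outer_def restr_def)
  next
    case True
    have "(\<Sum>j\<le>d. \<Sum>k<d. (prob d phi j k - 1 / (real d + 1)) * Proj d j k a b) =
        (\<Sum>j\<le>d. \<Sum>k<d. prob d phi j k * Proj d j k a b) -
          of_real (1 / (real d + 1)) * (\<Sum>j\<le>d. \<Sum>k<d. Proj d j k a b)"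
      by (simp add: algebra_simps sum_subtractf sum_distrib_left)
    also have "(\<Sum>j\<le>d. \<Sum>k<d. Proj d j k a b) = of_real (real d + 1) * (if a = b then 1 else 0)"
      using sum_Proj_eq_id[OF assms(2)] True by simp
    also have "(\<Sum>j\<le>d. \<Sum>k<d. prob d phi j k * Proj d j k a b) =
        phi a * cnj (phi b) + (if a = b then 1 else 0)"
      using sum_prob_Proj[OF assms(1,2)] True assms(3) by (simp add: unit_vec_def)
    moreover have "complex_of_nat d + 1 \<noteq> 0"
      by (metis add.commute of_nat_Suc of_nat_neq_0)
    ultimately show ?thesis
      using True by (simp add: outer_def restr_def flip: of_real_mult)
  qed
qed

theorem mainTheorem1:
  fixes d :: nat and phi :: "nat \<Rightarrow> complex"
  assumes "prime d" and "odd d"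
    and "fiducial d phi"
  shows "\<exists>\<alpha> :: nat \<Rightarrow> nat \<Rightarrow> real.
     (\<forall>j\<le>d. \<forall>r\<in>{1..d-1}. \<alpha> j (d - r) = - \<alpha> j r) \<and>
     (\<forall>j\<le>d. \<forall>k<d. inner d phi (mat_vec d (Proj d j k) phi) =
         1 / real d + 1 / (real d * sqrt (real d + 1)) *
           (\<Sum>r=1..d-1. omega_pow d (\<alpha> j r + real k * real r))) \<and>
     outer d phi phi =
       (\<lambda>a b. \<Sum>j\<le>d. \<Sum>k<d.
          (inner d phi (mat_vec d (Proj d j k) phi) - 1 / (real d + 1)) * Proj d j k a b)"
proof -
  have "\<forall>j\<in>{..d}. \<exists>\<alpha> :: nat \<Rightarrow> real. (\<forall>r\<in>{1..d-1}. \<alpha> (d - r) = - \<alpha> r) \<and>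
     (\<forall>k<d. prob d phi j k = 1 / real d + 1 / (real d * sqrt (real d + 1)) *
           (\<Sum>r=1..d-1. omega_pow d (\<alpha> r + real k * real r)))"
    using prob_phase_representation[OF assms(2) _ assms(3)] by blast
  then obtain \<alpha> where "\<forall>j\<in>{..d}. (\<forall>r\<in>{1..d-1}. \<alpha> j (d - r) = - \<alpha> j r) \<and>
     (\<forall>k<d. prob d phi j k = 1 / real d + 1 / (real d * sqrt (real d + 1)) *
           (\<Sum>r=1..d-1. omega_pow d (\<alpha> j r + real k * real r)))"
    by (rule bchoice[elim_format]) blast
  moreover have "unit_vec d phi" using assms(3) unfolding fiducial_def by blast
  ultimately show ?thesis
    using outer_eq_sum_prob_Proj[OF assms(1,2)] unfolding prob_def by auto
qed

end
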